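(* For $\nu>0$ define $f_\nu(x)=(1-x^2)^\nu$ for $|x|<1$ and $f_\nu(x)=0$ otherwise; for $X>0$ define $$g_{\nu,X}(x)=\frac{\Gamma(\frac32+2\nu)}{\sqrt\pi\,\Gamma(1+2\nu)}\int_{\mathbb{R}}f_\nu(y)f_\nu\!\left(\frac{2x}{X}-y\right)dy\quad(x\ge0),$$ and $h_{\nu,X}(t)=2\int_0^\infty g_{\nu,X}(x)\cos(tx)\,dx$. Then $g_{\nu,X}(0)=1$, $g_{\nu,X}$ is supported on $[0,X]$, $h_{\nu,X}$ is non-negative, and for any fixed $\varepsilon>0$, $$h_{\nu,X}(t)\ll_\varepsilon\nu^{-1/2}e^{-2\nu}X\left|\frac{4\nu}{Xt}\right|^{2\nu+2}$$ uniformly for $\left|\frac{Xt}{4}\right|\ge\nu\ge\varepsilon$. *)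

theory Defs
  imports "HOL-Analysis.Analysis"
begin

definition f_nu :: "real \<Rightarrow> real \<Rightarrow> real" where
  "f_nu \<nu> x = (if \<bar>x\<bar> < 1 then (1 - x\<^sup>2) powr \<nu> else 0)"

text \<open>g is only used for x >= 0 (the formula is evaluated for all real x).\<close>
definition g_nu :: "real \<Rightarrow> real \<Rightarrow> real \<Rightarrow> real" where
  "g_nu \<nu> X x = Gamma (3/2 + 2*\<nu>) / (sqrt pi * Gamma (1 + 2*\<nu>)) *
     (LINT y|lborel. f_nu \<nu> y * f_nu \<nu> (2*x/X - y))"

definition h_nu :: "real \<Rightarrow> real \<Rightarrow> real \<Rightarrow> real" where
  "h_nu \<nu> X t = 2 * (LBINT x:{0..}. g_nu \<nu> X x * cos (t*x))"

end

theory Submission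
  imports Defs "HOL-Complex_Analysis.Complex_Analysis"
begin

text \<open>Up to a constant \<open>c\<close>, \<open>g_nu \<nu> X\<close> is the self-convolution of \<open>f = f_nu \<nu>\<close>, rescaled so that
  its support \<open>[-2, 2]\<close> becomes \<open>[-X, X]\<close>. At the origin it is the Beta integral
  \<open>\<integral> (1 - y^2) powr (2\<nu>) dy = B(1/2, 2\<nu> + 1)\<close> over \<open>[-1, 1]\<close>, of which \<open>c\<close> is the
  reciprocal, and by the convolution theorem \<open>h_nu \<nu> X t = c (X/2) F(t X/2)^2\<close> with \<open>F\<close> the
  Fourier transform of \<open>f\<close>; in particular \<open>h_nu\<close> is non-negative.

  For the decay, \<open>(1 - z^2) powr \<nu> * exp (i k z)\<close> is holomorphic on the upper half disc, so by
  Cauchy's theorem \<open>\<bar>F k\<bar>\<close> is at most the integral of \<open>(2 sin \<theta>) powr \<nu> * exp (- k sin \<theta>)\<close> over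
  \<open>[0, \<pi>]\<close>. For \<open>k \<ge> 2\<nu>\<close> this integrand peaks where \<open>sin \<theta> = m = \<nu>/k\<close>, with height
  \<open>(2m) powr \<nu> * exp (-\<nu>)\<close>, and decays exponentially on the scale \<open>m / sqrt \<nu>\<close> around the
  peak (Laplace's method), so \<open>\<bar>F k\<bar> = O((2m) powr \<nu> * exp (-\<nu>) * m / sqrt \<nu>)\<close> for \<open>\<nu> \<ge> \<epsilon>\<close>.
  Squaring and using \<open>c = O(sqrt \<nu>)\<close> gives the bound, as \<open>2m = \<bar>4\<nu>/(X t)\<bar>\<close> for \<open>k = t X/2\<close>.\<close>

lemma integrable_indicator_Icc: "integrable lborel (indicator {a..b::real} :: real \<Rightarrow> real)"
  by (simp add: integrable_indicator_iff emeasure_lborel_Icc_eq)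

lemma lborel_integral_reflect:
  fixes f :: "real \<Rightarrow> real"
  shows "(LBINT x. f (- x)) = (LBINT x. f x)"
  using lborel_integral_real_affine[of "-1" f 0] by simp

lemma lborel_integral_odd:
  fixes f :: "real \<Rightarrow> real"
  assumes "\<And>x. f (- x) = - f x"
  shows "(LBINT x. f x) = 0"
  using lborel_integral_reflect[of f] by (simp add: assms)

lemma set_integral_atLeast_0_even:
  fixes q :: "real \<Rightarrow> real"
  assumes q: "integrable lborel q" and even: "\<And>x. q (- x) = q x"
  shows "(LBINT x:{0..}. q x) = (LBINT x. q x) / 2"
proof -
  have int: "integrable lborel (\<lambda>x. indicator S x * q x)" if "S \<in> sets borel" for S
    using integrable_mult_indicator[of S lborel q] that q by simp
  have "(LBINT x. q x) = (LBINT x. indicator {0..} x * q x + indicator {..<0} x * q x)"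
    by (intro Bochner_Integration.integral_cong) (auto simp: indicator_def)
  also have "\<dots> = (LBINT x. indicator {0..} x * q x) + (LBINT x. indicator {..<0} (- x) * q (- x))"
    using int by (simp add: lborel_integral_reflect[of "\<lambda>x. indicator {..<0} x * q x"])
  also have "(LBINT x. indicator {..<0} (- x) * q (- x)) = (LBINT x. indicator {0<..} x * q x)"
    by (simp add: even indicator_def)
  also have "\<dots> = (LBINT x. indicator {0..} x * q x)"
    using AE_lborel_singleton[of 0]
    by (intro integral_cong_AE borel_measurable_integrable int) (auto simp: indicator_def)
  finally show ?thesis by (simp add: set_lebesgue_integral_def)
qed

lemma f_nu_nonneg: "0 \<le> f_nu \<nu> x"
  by (simp add: f_nu_def)

lemma f_nu_eq_0: "1 \<le> \<bar>x\<bar> \<Longrightarrow> f_nu \<nu> x = 0"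
  by (simp add: f_nu_def)

lemma f_nu_minus [simp]: "f_nu \<nu> (- x) = f_nu \<nu> x"
  by (simp add: f_nu_def)

lemma f_nu_measurable [measurable]: "f_nu \<nu> \<in> borel_measurable borel"
  unfolding f_nu_def by measurable

lemma f_nu_eq_indicator:
  assumes "\<nu> > 0"
  shows "f_nu \<nu> x = indicator {-1..1} x * (1 - x\<^sup>2) powr \<nu>"
proof (cases "\<bar>x\<bar> = 1")
  case True
  then show ?thesis by (simp add: f_nu_def abs_square_eq_1)
qed (auto simp: f_nu_def indicator_def abs_le_iff abs_less_iff)

lemma f_nu_le_1:
  assumes "\<nu> > 0"
  shows "f_nu \<nu> x \<le> 1"
proof (cases "\<bar>x\<bar> < 1")
  case True
  then have "0 \<le> 1 - x\<^sup>2" "1 - x\<^sup>2 \<le> 1" by (auto simp: abs_square_less_1 less_imp_le)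
  then show ?thesis using True assms by (simp add: f_nu_def powr_le1)
qed (simp add: f_nu_def)

lemma abs_f_nu_le_indicator: "\<nu> > 0 \<Longrightarrow> \<bar>f_nu \<nu> x\<bar> \<le> indicator {-1..1} x"
  using f_nu_le_1[of \<nu> x] f_nu_eq_0[of x \<nu>] f_nu_nonneg[of \<nu> x]
  by (auto simp: indicator_def abs_le_iff)

lemma integrable_f_nu_mult:
  assumes "\<nu> > 0" "g \<in> borel_measurable borel" "\<And>y. \<bar>g y\<bar> \<le> 1"
  shows "integrable lborel (\<lambda>y. f_nu \<nu> y * g y)"
proof (rule Bochner_Integration.integrable_bound[OF integrable_indicator_Icc])
  show "(\<lambda>y. f_nu \<nu> y * g y) \<in> borel_measurable lborel" using assms(2) by measurable
  show "AE y in lborel. norm (f_nu \<nu> y * g y) \<le> norm (indicator {-1..1} y :: real)"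
    using abs_f_nu_le_indicator[OF assms(1)] assms(3)
    by (auto intro!: AE_I2 simp: abs_mult intro: order_trans[OF mult_right_le_one_le])
qed

section \<open>The Beta integral and the normalising constant\<close>

lemma nn_integral_one_minus_square_powr:
  fixes a :: real
  assumes a: "a > -1"
  shows "(\<integral>\<^sup>+x. indicator {-1..1} x * (1 - x\<^sup>2) powr a \<partial>lborel) = ennreal (Beta (1/2) (a + 1))"
proof -
  have "((\<lambda>t. t powr (-1/2) * (1 - t) powr a) has_integral Beta (1/2) (a + 1)) {0..1}"
    using has_integral_Beta_real[of "1/2" "a + 1"] a by simp
  from nn_integral_has_integral_lebesgue[OF _ this] have
     "ennreal (Beta (1/2) (a + 1)) =
        (\<integral>\<^sup>+t. ennreal (t powr (-1/2) * (1 - t) powr a * indicator {0^2..1^2} t) \<partial>lborel)"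
    by (simp add: mult_ac ennreal_mult' ennreal_indicator)
  also have "\<dots> = (\<integral>\<^sup>+ x. ennreal (x\<^sup>2 powr - (1/2) * (1 - x\<^sup>2) powr a * (2 * x) *
                          indicator {0..1} x) \<partial>lborel)"
    by (subst nn_integral_substitution[where g = "\<lambda>x. x ^ 2" and g' = "\<lambda>x. 2 * x"])
       (auto intro!: derivative_eq_intros continuous_intros simp: set_borel_measurable_def)
  also have "\<dots> = (\<integral>\<^sup>+ x. 2 * ennreal ((1 - x\<^sup>2) powr a * indicator {0..1} x) \<partial>lborel)"
    by (intro nn_integral_cong_AE AE_I[of _ _ "{0}"])
       (auto simp: indicator_def powr_minus powr_half_sqrt field_split_simps ennreal_mult')
  also have "\<dots> = (\<integral>\<^sup>+ x. ennreal ((1 - x\<^sup>2) powr a * indicator {-1..0} x) \<partial>lborel) +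
                    (\<integral>\<^sup>+ x. ennreal ((1 - x\<^sup>2) powr a * indicator {0..1} x) \<partial>lborel)"
  proof -
    have "(\<integral>\<^sup>+ x. ennreal ((1 - x\<^sup>2) powr a * indicator {0..1} x) \<partial>lborel) =
          (\<integral>\<^sup>+ x. ennreal ((1 - x\<^sup>2) powr a * indicator {-1..0} x) \<partial>lborel)"
      by (subst nn_integral_real_affine[of _ "-1" 0])
         (auto simp: indicator_def intro!: nn_integral_cong)
    then show ?thesis by (simp add: mult_2 nn_integral_add)
  qed
  also have "\<dots> = (\<integral>\<^sup>+ x. ennreal ((1 - x\<^sup>2) powr a *
                    (indicator {-1..0} x + indicator {0..1} x)) \<partial>lborel)"
    by (subst nn_integral_add [symmetric]) (auto simp: algebra_simps)
  also have "\<dots> = (\<integral>\<^sup>+ x. ennreal (indicator {-1..1} x * (1 - x\<^sup>2) powr a) \<partial>lborel)"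
    by (intro nn_integral_cong_AE AE_I[of _ _ "{0}"]) (auto simp: indicator_def)
  finally show ?thesis by simp
qed

lemma integrable_one_minus_square_powr:
  fixes a :: real
  assumes "a > -1"
  shows "integrable lborel (\<lambda>x. indicator {-1..1} x * (1 - x\<^sup>2) powr a)"
  using nn_integral_one_minus_square_powr[OF assms]
  by (intro integrableI_nonneg) (auto simp: ennreal_mult' ennreal_indicator)

lemma Beta_real_pos: "a > 0 \<Longrightarrow> b > 0 \<Longrightarrow> Beta a b > (0::real)"
  by (simp add: Beta_def Gamma_real_pos)

lemma integral_one_minus_square_powr:
  fixes a :: real
  assumes a: "a > -1"
  shows "(LBINT x. indicator {-1..1} x * (1 - x\<^sup>2) powr a) = Beta (1/2) (a + 1)"
proof -
  have "(LBINT x. indicator {-1..1} x * (1 - x\<^sup>2) powr a) =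
     enn2real (\<integral>\<^sup>+x. ennreal (indicator {-1..1} x * (1 - x\<^sup>2) powr a) \<partial>lborel)"
    by (rule integral_eq_nn_integral) auto
  then show ?thesis
    using nn_integral_one_minus_square_powr[OF a] Beta_real_pos[of "1/2" "a + 1"] a by simp
qed

lemma exp_minus_one_le_powr:
  fixes a :: real
  assumes "a > 0"
  shows "exp (-1) \<le> (a / (a + 1)) powr a"
proof -
  have "ln (a / (a + 1)) = - ln (1 + 1/a)"
    using assms by (simp add: ln_div field_simps)
  moreover have "ln (1 + 1/a) \<le> 1/a" using assms by (intro ln_add_one_self_le_self) simp
  ultimately have "-1 \<le> a * ln (a / (a + 1))" using assms by (simp add: field_simps)
  then show ?thesis using assms by (simp add: powr_def mult.commute)
qed

lemma Beta_one_half_ge: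
  fixes a :: real
  assumes "a > 0"
  shows "2 / (exp 1 * sqrt (a + 1)) \<le> Beta (1/2) (a + 1)"
proof -
  define \<delta> where "\<delta> = 1 / sqrt (a + 1)"
  have \<delta>: "0 < \<delta>" "\<delta> \<le> 1" "\<delta>\<^sup>2 = 1 / (a + 1)" using assms by (simp_all add: \<delta>_def power_divide)
  define C where "C = (a / (a + 1)) powr a"
  have "2 * \<delta> * C = (LBINT x. indicator {-\<delta>..\<delta>} x * C)"
    using \<delta> by simp
  also have "\<dots> \<le> (LBINT x. indicator {-1..1} x * (1 - x\<^sup>2) powr a)"
  proof (rule integral_mono)
    show "integrable lborel (\<lambda>x. indicator {-\<delta>..\<delta>} x * C)"
      using integrable_indicator_Icc by simp
    show "integrable lborel (\<lambda>x. indicator {-1..1} x * (1 - x\<^sup>2) powr a)"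
      using assms by (intro integrable_one_minus_square_powr) simp
    fix x :: real
    show "indicator {-\<delta>..\<delta>} x * C \<le> indicator {-1..1} x * (1 - x\<^sup>2) powr a"
    proof (cases "x \<in> {-\<delta>..\<delta>}")
      case True
      then have "x\<^sup>2 \<le> \<delta>\<^sup>2" using abs_le_square_iff[of x \<delta>] \<delta> by auto
      moreover have "\<delta>\<^sup>2 \<le> 1" using \<delta>(1,2) by (intro power_le_one) auto
      moreover have "a / (a + 1) = 1 - \<delta>\<^sup>2" using assms \<delta>(3) by (simp add: field_simps)
      ultimately have "C \<le> (1 - x\<^sup>2) powr a" unfolding C_def using assms by (intro powr_mono2) auto
      then show ?thesis using True \<delta> by simp
    qed (simp add: C_def)
  qed
  also have "\<dots> = Beta (1/2) (a + 1)" using assms by (intro integral_one_minus_square_powr) simp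
  finally have "2 * \<delta> * C \<le> Beta (1/2) (a + 1)" .
  moreover have "2 * \<delta> * exp (-1) \<le> 2 * \<delta> * C"
    using exp_minus_one_le_powr[OF assms] \<delta> by (simp add: C_def)
  ultimately show ?thesis by (simp add: \<delta>_def exp_minus field_simps)
qed

definition g_const :: "real \<Rightarrow> real" where
  "g_const \<nu> = Gamma (3/2 + 2*\<nu>) / (sqrt pi * Gamma (1 + 2*\<nu>))"

lemma g_const_pos: "\<nu> > -1/2 \<Longrightarrow> g_const \<nu> > 0"
  by (simp add: g_const_def Gamma_real_pos)

lemma g_const_mult_Beta:
  assumes "\<nu> > -1/2"
  shows "g_const \<nu> * Beta (1/2) (2*\<nu> + 1) = 1"
proof -
  have "Gamma (3/2 + 2*\<nu>) > 0" "Gamma (1 + 2*\<nu>) > 0" using assms by (auto intro!: Gamma_real_pos)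
  moreover have "1/2 + (2*\<nu> + 1) = 3/2 + 2*\<nu>" by simp
  ultimately show ?thesis unfolding g_const_def Beta_def by (simp add: Gamma_one_half_real add.commute)
qed

lemma g_const_le:
  assumes "\<nu> > 0"
  shows "g_const \<nu> \<le> exp 1 / 2 * sqrt (2*\<nu> + 1)"
proof -
  have B: "2 / (exp 1 * sqrt (2*\<nu> + 1)) \<le> Beta (1/2) (2*\<nu> + 1)"
    using Beta_one_half_ge[of "2*\<nu>"] assms by simp
  have pos: "0 < 2 / (exp 1 * sqrt (2*\<nu> + 1))" "0 < Beta (1/2) (2*\<nu> + 1)"
    using Beta_real_pos assms by simp_all
  then have "g_const \<nu> = 1 / Beta (1/2) (2*\<nu> + 1)"
    using g_const_mult_Beta[of \<nu>] assms by (simp add: field_simps)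
  also have "\<dots> \<le> 1 / (2 / (exp 1 * sqrt (2*\<nu> + 1)))"
    using B pos by (intro divide_left_mono mult_pos_pos) auto
  finally show ?thesis by simp
qed

lemma g_nu_0:
  assumes "\<nu> > 0"
  shows "g_nu \<nu> X 0 = 1"
proof -
  have "f_nu \<nu> y * f_nu \<nu> (2*0/X - y) = indicator {-1..1} y * (1 - y\<^sup>2) powr (2*\<nu>)" for y
    unfolding f_nu_eq_indicator[OF assms] mult_2 powr_add by (simp add: indicator_def)
  then have "g_nu \<nu> X 0 = g_const \<nu> * Beta (1/2) (2*\<nu> + 1)"
    using integral_one_minus_square_powr[of "2*\<nu>"] assms by (simp add: g_nu_def g_const_def)
  then show ?thesis using g_const_mult_Beta assms by simp
qed

lemma g_nu_eq_0:
  assumes "X > 0" "X < x"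
  shows "g_nu \<nu> X x = 0"
proof -
  have "2 < 2*x/X" using assms by (simp add: field_simps)
  then have "(\<lambda>y. f_nu \<nu> y * f_nu \<nu> (2*x/X - y)) = (\<lambda>_. 0)"
    by (intro ext) (simp add: f_nu_def)
  then show ?thesis by (simp add: g_nu_def)
qed

section \<open>Positivity of the cosine transform\<close>

definition f_conv :: "real \<Rightarrow> real \<Rightarrow> real" where
  "f_conv \<nu> u = (LBINT y. f_nu \<nu> y * f_nu \<nu> (u - y))"

text \<open>As \<open>f_nu\<close> is even, \<open>f_hat\<close> is its Fourier transform.\<close>

definition f_hat :: "real \<Rightarrow> real \<Rightarrow> real" where
  "f_hat \<nu> k = (LBINT y. f_nu \<nu> y * cos (k * y))"

lemma f_hat_minus [simp]: "f_hat \<nu> (- k) = f_hat \<nu> k"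
  by (simp add: f_hat_def)

lemma g_nu_eq_f_conv: "g_nu \<nu> X x = g_const \<nu> * f_conv \<nu> (2*x/X)"
  unfolding g_nu_def g_const_def f_conv_def ..

lemma f_conv_minus [simp]: "f_conv \<nu> (- u) = f_conv \<nu> u"
proof -
  have "f_conv \<nu> (- u) = (LBINT y. f_nu \<nu> (- y) * f_nu \<nu> (- u - - y))"
    unfolding f_conv_def by (rule lborel_integral_reflect[symmetric])
  also have "(\<lambda>y. f_nu \<nu> (- y) * f_nu \<nu> (- u - - y)) = (\<lambda>y. f_nu \<nu> y * f_nu \<nu> (u - y))"
    using f_nu_minus[of \<nu> "u - y" for y] by simp
  finally show ?thesis unfolding f_conv_def .
qed

lemma integral_shifted_f_nu_cos:
  assumes "\<nu> > 0"
  shows "(LBINT u. f_nu \<nu> (u - y) * cos (k * u)) = cos (k * y) * f_hat \<nu> k"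
proof -
  have int: "integrable lborel (\<lambda>w. f_nu \<nu> w * cos (k * w))"
            "integrable lborel (\<lambda>w. f_nu \<nu> w * sin (k * w))"
    by (auto intro!: integrable_f_nu_mult assms)
  have "(LBINT u. f_nu \<nu> (u - y) * cos (k * u)) = (LBINT w. f_nu \<nu> w * cos (k * (y + w)))"
    using lborel_integral_real_affine[where c=1 and t=y and f="\<lambda>u. f_nu \<nu> (u - y) * cos (k * u)"]
    by simp
  also have "\<dots> = (LBINT w. cos (k * y) * (f_nu \<nu> w * cos (k * w)) - sin (k * y) * (f_nu \<nu> w * sin (k * w)))"
    by (simp add: distrib_left cos_add algebra_simps)
  also have "\<dots> = cos (k * y) * f_hat \<nu> k - sin (k * y) * (LBINT w. f_nu \<nu> w * sin (k * w))"
    using int by (simp add: f_hat_def)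
  also have "(LBINT w. f_nu \<nu> w * sin (k * w)) = 0"
    by (rule lborel_integral_odd) simp
  finally show ?thesis by simp
qed

lemma integrable_f_nu_conv_cos:
  assumes "\<nu> > 0"
  shows "integrable (lborel \<Otimes>\<^sub>M lborel) (\<lambda>(u, y). f_nu \<nu> y * f_nu \<nu> (u - y) * cos (k * u))"
proof -
  let ?A = "{-2..2::real} \<times> {-1..1::real}"
  have "emeasure (lborel \<Otimes>\<^sub>M lborel) ?A < \<infinity>"
    unfolding lborel_prod by (rule emeasure_bounded_finite) (auto intro!: bounded_Times)
  then have int: "integrable (lborel \<Otimes>\<^sub>M lborel) (indicator ?A :: real \<times> real \<Rightarrow> real)"
    unfolding lborel_prod by (simp add: integrable_indicator_iff borel_closed closed_Times)
  show ?thesis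
  proof (rule Bochner_Integration.integrable_bound[OF int])
    show "(\<lambda>(u, y). f_nu \<nu> y * f_nu \<nu> (u - y) * cos (k * u)) \<in> borel_measurable (lborel \<Otimes>\<^sub>M lborel)"
      by measurable
    have "\<bar>f_nu \<nu> y * f_nu \<nu> (u - y) * cos (k * u)\<bar> \<le> indicator ?A (u, y)" for u y
    proof (cases "(u, y) \<in> ?A")
      case True
      have "\<bar>f_nu \<nu> y\<bar> \<le> 1" "\<bar>f_nu \<nu> (u - y)\<bar> \<le> 1" "\<bar>cos (k * u)\<bar> \<le> 1"
        using f_nu_le_1[OF assms] f_nu_nonneg by auto
      then show ?thesis using True by (simp add: abs_mult mult_le_one)
    next
      case False
      then have "\<bar>y\<bar> \<ge> 1 \<or> \<bar>u - y\<bar> \<ge> 1" by auto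
      then show ?thesis by (auto simp: f_nu_eq_0)
    qed
    then show "AE x in lborel \<Otimes>\<^sub>M lborel.
        norm ((\<lambda>(u, y). f_nu \<nu> y * f_nu \<nu> (u - y) * cos (k * u)) x) \<le> norm (indicator ?A x :: real)"
      by (intro AE_I2) auto
  qed
qed

lemma
  assumes "\<nu> > 0"
  shows integrable_f_conv_mult_cos: "integrable lborel (\<lambda>u. f_conv \<nu> u * cos (k * u))"
    and integral_f_conv_mult_cos: "(LBINT u. f_conv \<nu> u * cos (k * u)) = (f_hat \<nu> k)\<^sup>2"
proof -
  note P = integrable_f_nu_conv_cos[OF assms, of k]
  have eq: "f_conv \<nu> u * cos (k * u) = (LBINT y. f_nu \<nu> y * f_nu \<nu> (u - y) * cos (k * u))" for u
    unfolding f_conv_def by simp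
  show "integrable lborel (\<lambda>u. f_conv \<nu> u * cos (k * u))"
    unfolding eq using lborel_pair.integrable_fst[OF P] .
  have "(LBINT u. f_conv \<nu> u * cos (k * u)) = (LBINT y. LBINT u. f_nu \<nu> y * f_nu \<nu> (u - y) * cos (k * u))"
    unfolding eq using lborel_pair.Fubini_integral[OF P] by simp
  also have "\<dots> = (LBINT y. f_nu \<nu> y * cos (k * y) * f_hat \<nu> k)"
    by (simp add: mult.assoc integral_shifted_f_nu_cos[OF assms])
  finally show "(LBINT u. f_conv \<nu> u * cos (k * u)) = (f_hat \<nu> k)\<^sup>2"
    by (simp add: f_hat_def power2_eq_square)
qed

lemma h_nu_eq:
  assumes "\<nu> > 0" "X > 0"
  shows "h_nu \<nu> X t = g_const \<nu> * (X/2) * (f_hat \<nu> (t*X/2))\<^sup>2"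
proof -
  define k where "k = t*X/2"
  define G where "G u = f_conv \<nu> u * cos (k * u)" for u
  define q where "q x = G (0 + (2/X) * x)" for x
  have q_eq: "g_nu \<nu> X x * cos (t * x) = g_const \<nu> * q x" for x
    using assms by (simp add: q_def G_def k_def g_nu_eq_f_conv)
  have G: "integrable lborel G" unfolding G_def by (rule integrable_f_conv_mult_cos[OF assms(1)])
  then have "integrable lborel q"
    unfolding q_def using lborel_integrable_real_affine_iff[of "2/X" G 0] assms by simp
  moreover have "q (- x) = q x" for x by (simp add: q_def G_def)
  ultimately have "(LBINT x:{0..}. q x) = (LBINT x. q x) / 2"
    by (rule set_integral_atLeast_0_even)
  also have "(LBINT x. q x) = (X/2) * (f_hat \<nu> k)\<^sup>2"
    using lborel_integral_real_affine[of "2/X" G 0] integral_f_conv_mult_cos[OF assms(1)] assms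
    by (simp add: q_def G_def)
  finally show ?thesis
    by (simp add: h_nu_def q_eq set_integral_mult_right k_def)
qed

lemma h_nu_nonneg: "\<nu> > 0 \<Longrightarrow> X > 0 \<Longrightarrow> 0 \<le> h_nu \<nu> X t"
  using g_const_pos[of \<nu>] by (simp add: h_nu_eq)

section \<open>Shifting the Fourier integral to the unit half circle\<close>

definition half_disc :: "complex set" where
  "half_disc = cball 0 1 \<inter> {z. 0 \<le> Im z}"

text \<open>The holomorphic extension of \<open>x \<mapsto> f_nu \<nu> x * exp (\<i> k x)\<close> from \<open>[-1, 1]\<close> to the upper half disc.\<close>

definition f_nu_exp :: "real \<Rightarrow> real \<Rightarrow> complex \<Rightarrow> complex" where
  "f_nu_exp \<nu> k z = (1 - z\<^sup>2) powr (of_real \<nu>) * exp (\<i> * of_real k * z)"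

lemma convex_half_disc: "convex half_disc"
  unfolding half_disc_def
  by (intro convex_Int convex_cball convex_halfspace_Im_ge[of 0])

lemma closed_segment_subset_half_disc: "closed_segment (-1) 1 \<subseteq> half_disc"
proof
  fix z assume "z \<in> closed_segment (-1) (1::complex)"
  then obtain u where u: "0 \<le> u" "u \<le> 1" "z = (1 - u) *\<^sub>R (-1) + u *\<^sub>R 1"
    unfolding closed_segment_def by auto
  then have z: "z = of_real (2*u - 1)" by (simp add: scaleR_conv_of_real algebra_simps)
  have "cmod z \<le> 1" unfolding z norm_of_real using u by simp
  moreover have "Im z = 0" using z by simp
  ultimately show "z \<in> half_disc" by (simp add: half_disc_def)
qed

lemma half_circle_subset_half_disc: "path_image (part_circlepath 0 1 0 pi) \<subseteq> half_disc"
  by (auto simp: path_image_part_circlepath half_disc_def Im_exp sin_ge_zero)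

lemma Re_one_minus_square_nonneg:
  assumes "z \<in> half_disc"
  shows "0 \<le> Re (1 - z\<^sup>2)"
proof -
  have "\<bar>Re z\<bar> \<le> 1" using assms abs_Re_le_cmod[of z] by (auto simp: half_disc_def)
  then have "(Re z)\<^sup>2 \<le> 1" by (simp add: abs_square_le_1)
  moreover have "Re (1 - z\<^sup>2) = 1 - (Re z)\<^sup>2 + (Im z)\<^sup>2" by (simp add: power2_eq_square)
  ultimately show ?thesis using zero_le_power2[of "Im z"] by linarith
qed

lemma one_minus_square_notin_nonpos_Reals:
  assumes "z \<in> half_disc" "z \<noteq> 1" "z \<noteq> -1"
  shows "1 - z\<^sup>2 \<notin> \<real>\<^sub>\<le>\<^sub>0"
proof
  assume "1 - z\<^sup>2 \<in> \<real>\<^sub>\<le>\<^sub>0"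
  then have "1 - (Re z)\<^sup>2 + (Im z)\<^sup>2 \<le> 0"
    by (simp add: complex_nonpos_Reals_iff power2_eq_square)
  moreover have "(Re z)\<^sup>2 + (Im z)\<^sup>2 \<le> 1"
    using assms(1) by (simp add: half_disc_def cmod_def real_sqrt_le_1_iff)
  ultimately have "(Im z)\<^sup>2 = 0" "(Re z)\<^sup>2 = 1"
    using zero_le_power2[of "Im z"] by linarith+
  then have "z = 1 \<or> z = -1" by (auto simp: complex_eq_iff power2_eq_1_iff)
  with assms show False by auto
qed

lemma continuous_on_f_nu_exp: "\<nu> > 0 \<Longrightarrow> continuous_on half_disc (f_nu_exp \<nu> k)"
  unfolding f_nu_exp_def
  by (intro continuous_intros continuous_on_powr_complex) (use Re_one_minus_square_nonneg in auto)

lemma f_nu_exp_field_differentiable: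
  assumes "z \<in> half_disc" "z \<noteq> 1" "z \<noteq> -1"
  shows "f_nu_exp \<nu> k field_differentiable at z"
proof -
  have "f_nu_exp \<nu> k analytic_on {z}"
    unfolding f_nu_exp_def
    by (intro analytic_intros) (use one_minus_square_notin_nonpos_Reals[OF assms] in auto)
  then show ?thesis using analytic_on_imp_differentiable_at by blast
qed

lemma norm_one_minus_cis_square:
  assumes "0 \<le> t" "t \<le> pi"
  shows "cmod (1 - (cis t)\<^sup>2) = 2 * sin t"
proof -
  have "1 - (cis t)\<^sup>2 = cis t * (cis (-t) - cis t)"
    by (simp add: power2_eq_square algebra_simps cis_mult)
  also have "cis (-t) - cis t = - (2 * \<i> * of_real (sin t))"
    by (simp add: complex_eq_iff)
  finally show ?thesis using sin_ge_zero[OF assms] by (simp add: norm_mult)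
qed

lemma norm_f_nu_exp_cis:
  assumes "0 \<le> t" "t \<le> pi"
  shows "norm (f_nu_exp \<nu> k (cis t)) = (2 * sin t) powr \<nu> * exp (- k * sin t)"
  unfolding f_nu_exp_def norm_mult
  by (subst norm_powr_real_powr') (auto simp: norm_one_minus_cis_square[OF assms] norm_exp_eq_Re)

lemma f_hat_eq_Re_contour_integral:
  assumes "\<nu> > 0"
  shows "f_hat \<nu> k = Re (contour_integral (linepath (-1) 1) (f_nu_exp \<nu> k))"
proof -
  define I where "I = contour_integral (linepath (-1) 1) (f_nu_exp \<nu> k)"
  have "f_nu_exp \<nu> k contour_integrable_on linepath (-1) 1"
    by (rule contour_integrable_continuous_linepath)
       (use continuous_on_subset[OF continuous_on_f_nu_exp[OF assms] closed_segment_subset_half_disc] in auto)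
  then have "(f_nu_exp \<nu> k has_contour_integral I) (linepath (-1) 1)"
    unfolding I_def by (rule has_contour_integral_integral)
  then have "((\<lambda>x. f_nu_exp \<nu> k (of_real x)) has_integral I) {-1..1}"
    by (subst (asm) has_contour_integral_linepath_Reals_iff) auto
  from has_integral_Re[OF this]
  have "((\<lambda>x. (1 - x\<^sup>2) powr \<nu> * cos (k * x)) has_integral Re I) {-1..1}"
  proof (rule has_integral_eq[rotated])
    fix x :: real assume "x \<in> {-1..1}"
    then have "0 \<le> 1 - x\<^sup>2" by (simp add: abs_square_le_1 abs_le_iff)
    then show "Re (f_nu_exp \<nu> k (of_real x)) = (1 - x\<^sup>2) powr \<nu> * cos (k * x)"
      using powr_of_real[of "1 - x\<^sup>2" \<nu>] by (simp add: f_nu_exp_def Re_exp)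
  qed
  moreover have "set_integrable lborel {-1..1} (\<lambda>x. (1 - x\<^sup>2) powr \<nu> * cos (k * x))"
    unfolding set_integrable_def
    by (intro borel_integrable_compact continuous_intros continuous_on_powr')
       (use assms in \<open>auto simp: abs_square_le_1 abs_le_iff\<close>)
  ultimately have "(LINT x:{-1..1}|lborel. (1 - x\<^sup>2) powr \<nu> * cos (k * x)) = Re I"
    using set_borel_integral_eq_integral(2) integral_unique by metis
  then show ?thesis
    by (simp add: I_def f_hat_def f_nu_eq_indicator[OF assms] set_lebesgue_integral_def mult.assoc)
qed

lemma contour_integral_f_nu_exp_half_circle:
  assumes "\<nu> > 0"
  shows "contour_integral (linepath (-1) 1) (f_nu_exp \<nu> k) =
         - contour_integral (part_circlepath 0 1 0 pi) (f_nu_exp \<nu> k)"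
proof -
  define g1 where "g1 = linepath (-1) (1::complex)"
  define g2 where "g2 = part_circlepath 0 1 0 pi"
  note cont = continuous_on_f_nu_exp[OF assms, of k]
  have v: "valid_path g1" "valid_path g2" unfolding g1_def g2_def by auto
  have ends: "pathfinish g1 = pathstart g2" "pathfinish g2 = pathstart g1"
    by (auto simp: g1_def g2_def pathstart_def pathfinish_def part_circlepath_def linepath_def)
  have im: "path_image g1 \<subseteq> half_disc" "path_image g2 \<subseteq> half_disc"
    unfolding g1_def g2_def using closed_segment_subset_half_disc half_circle_subset_half_disc by auto
  have c1: "f_nu_exp \<nu> k contour_integrable_on g1"
    unfolding g1_def using continuous_on_subset[OF cont im(1)]
    by (intro contour_integrable_continuous_linepath) (simp add: g1_def)
  have c2: "f_nu_exp \<nu> k contour_integrable_on g2"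
    unfolding g2_def using continuous_on_subset[OF cont im(2)]
    by (intro contour_integrable_continuous_part_circlepath) (simp add: g2_def)
  have "(f_nu_exp \<nu> k has_contour_integral 0) (g1 +++ g2)"
  proof (rule Cauchy_theorem_convex[OF cont convex_half_disc, of "{1, -1}"])
    show "\<And>z. z \<in> interior half_disc - {1, -1} \<Longrightarrow> f_nu_exp \<nu> k field_differentiable at z"
      using f_nu_exp_field_differentiable interior_subset by blast
  qed (use v ends im in \<open>auto simp: path_image_join\<close>)
  then have "contour_integral g1 (f_nu_exp \<nu> k) + contour_integral g2 (f_nu_exp \<nu> k) = 0"
    using contour_integral_join[OF c1 c2 v] contour_integral_unique by simp
  then show ?thesis unfolding g1_def g2_def by (simp add: eq_neg_iff_add_eq_0)
qed

lemma abs_f_hat_le_half_circle_integral: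
  assumes "\<nu> > 0"
  shows "\<bar>f_hat \<nu> k\<bar> \<le> integral {0..pi} (\<lambda>t. (2 * sin t) powr \<nu> * exp (- k * sin t))"
proof -
  define I where "I = contour_integral (part_circlepath 0 1 0 pi) (f_nu_exp \<nu> k)"
  have "f_nu_exp \<nu> k contour_integrable_on part_circlepath 0 1 0 pi"
    using continuous_on_subset[OF continuous_on_f_nu_exp[OF assms] half_circle_subset_half_disc]
    by (intro contour_integrable_continuous_part_circlepath) simp
  then have "(f_nu_exp \<nu> k has_contour_integral I) (part_circlepath 0 1 0 pi)"
    unfolding I_def by (rule has_contour_integral_integral)
  then have I: "((\<lambda>t. f_nu_exp \<nu> k (cis t) * \<i> * cis t) has_integral I) {0..pi}"
    by (subst (asm) has_contour_integral_part_circlepath_iff) auto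
  have "continuous_on {0..pi} (\<lambda>t. (2 * sin t) powr \<nu> * exp (- k * sin t))"
    by (intro continuous_intros continuous_on_powr') (use assms sin_ge_zero in auto)
  then have "norm I \<le> integral {0..pi} (\<lambda>t. (2 * sin t) powr \<nu> * exp (- k * sin t))"
    using integral_norm_bound_integral[OF has_integral_integrable[OF I] integrable_continuous_interval]
      integral_unique[OF I]
    by (simp add: norm_mult norm_f_nu_exp_cis)
  moreover have "\<bar>f_hat \<nu> k\<bar> \<le> norm I"
    using f_hat_eq_Re_contour_integral[OF assms] contour_integral_f_nu_exp_half_circle[OF assms]
      abs_Re_le_cmod
    by (simp add: I_def)
  ultimately show ?thesis by linarith
qed

section \<open>A Laplace-type bound on the half circle\<close>

lemma ln_add_one_minus_le:
  fixes t :: real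
  assumes "t > -1"
  shows "ln (1 + t) - t \<le> - (sqrt (1 + t) - 1)\<^sup>2"
proof -
  define s where "s = sqrt (1 + t)"
  have s: "s > 0" "s\<^sup>2 = 1 + t" unfolding s_def using assms by simp_all
  have "ln (1 + t) = 2 * ln s" using s ln_realpow[of s 2] by simp
  also have "\<dots> \<le> 2 * (s - 1)" using ln_le_minus_one[OF s(1)] by simp
  finally show ?thesis using s(2) unfolding s_def[symmetric] by (simp add: power2_eq_square algebra_simps)
qed

lemma ln_add_one_minus_le_square:
  fixes t :: real
  assumes "-1 < t" "t \<le> 1"
  shows "ln (1 + t) - t \<le> - (4/25) * t\<^sup>2"
proof -
  define s where "s = sqrt (1 + t)"
  have s: "0 \<le> s" "s\<^sup>2 = 1 + t" unfolding s_def using assms by simp_all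
  have "s\<^sup>2 \<le> (3/2)\<^sup>2" using s assms by (simp add: power2_eq_square)
  then have "s \<le> 3/2" by (rule power2_le_imp_le) simp
  then have "(s + 1)\<^sup>2 \<le> (5/2)\<^sup>2" using s by (intro power_mono) auto
  then have "(s + 1)\<^sup>2 \<le> 25/4" by (simp add: power2_eq_square)
  moreover have "t\<^sup>2 = (s - 1)\<^sup>2 * (s + 1)\<^sup>2"
    using s by (simp add: power2_eq_square algebra_simps)
  ultimately have "t\<^sup>2 \<le> (s - 1)\<^sup>2 * (25/4)"
    using mult_left_mono[of "(s + 1)\<^sup>2" "25/4" "(s - 1)\<^sup>2"] by simp
  then show ?thesis using ln_add_one_minus_le[OF assms(1)] unfolding s_def by simp
qed

lemma ln_add_one_minus_le_linear:
  fixes t :: real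
  assumes "1 \<le> t"
  shows "ln (1 + t) - t \<le> - t / 7"
proof -
  define s where "s = sqrt (1 + t)"
  have s: "0 \<le> s" "s\<^sup>2 = 1 + t" unfolding s_def using assms by simp_all
  then have "1\<^sup>2 \<le> s\<^sup>2" using assms by simp
  then have "1 \<le> s" by (rule power2_le_imp_le) (use s in simp)
  then have "s * 1 \<le> s * s" by (intro mult_left_mono) auto
  then have "(s + 1)\<^sup>2 \<le> 7 * t" using s assms by (simp add: power2_eq_square algebra_simps)
  moreover have "t * t = (s - 1)\<^sup>2 * (s + 1)\<^sup>2"
    using s by (simp add: power2_eq_square algebra_simps)
  ultimately have "t * t \<le> (s - 1)\<^sup>2 * (7 * t)"
    using mult_left_mono[of "(s + 1)\<^sup>2" "7 * t" "(s - 1)\<^sup>2"] by simp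
  then have "t / 7 \<le> (s - 1)\<^sup>2" using assms by (simp add: field_simps)
  then show ?thesis using ln_add_one_minus_le[of t] assms unfolding s_def by simp
qed

definition decay_rate :: "real \<Rightarrow> real" where
  "decay_rate \<nu> = min (sqrt \<nu> / 3) (\<nu> / 8)"

lemma decay_rate_pos: "\<nu> > 0 \<Longrightarrow> decay_rate \<nu> > 0"
  by (simp add: decay_rate_def)

text \<open>Quadratic decay near \<open>t = 0\<close> and linear decay for large \<open>t\<close> merge into one linear bound at the
  price of the additive constant \<open>1\<close>, which covers the range \<open>\<bar>t\<bar> \<lesssim> 1 / sqrt \<nu>\<close>.\<close>

lemma nu_mult_ln_add_one_minus_le:
  fixes t \<nu> :: real
  assumes "t > -1" "\<nu> > 0"
  shows "\<nu> * (ln (1 + t) - t) \<le> 1 - decay_rate \<nu> * \<bar>t\<bar>"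
proof (cases "t \<le> 1")
  case True
  define x where "x = sqrt \<nu> * \<bar>t\<bar>"
  have "x / 3 \<le> 1 + 4/25 * x\<^sup>2"
    using zero_le_power2[of "x - 25/24"] by (simp add: power2_eq_square field_simps)
  moreover have "\<nu> * (4/25) * t\<^sup>2 = 4/25 * x\<^sup>2" using assms by (simp add: x_def power_mult_distrib)
  moreover have "\<nu> * (ln (1 + t) - t) \<le> \<nu> * (- (4/25) * t\<^sup>2)"
    using ln_add_one_minus_le_square[OF assms(1) True] assms(2) by (intro mult_left_mono) auto
  moreover have "decay_rate \<nu> * \<bar>t\<bar> \<le> x / 3"
    using mult_right_mono[of "decay_rate \<nu>" "sqrt \<nu> / 3" "\<bar>t\<bar>"] by (simp add: x_def decay_rate_def)
  ultimately show ?thesis by simp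
next
  case False
  have "\<nu> * (ln (1 + t) - t) \<le> \<nu> * (- t / 7)"
    using ln_add_one_minus_le_linear[of t] False assms(2) by (intro mult_left_mono) auto
  moreover have "decay_rate \<nu> * \<bar>t\<bar> \<le> \<nu> * t / 7"
  proof -
    have "decay_rate \<nu> * t \<le> \<nu> / 8 * t"
      unfolding decay_rate_def using False by (intro mult_right_mono) auto
    also have "\<dots> \<le> \<nu> * t / 7" using False assms(2) by simp
    finally show ?thesis using False by simp
  qed
  ultimately show ?thesis by simp
qed

lemma powr_mult_exp_le_peak:
  fixes x m k \<nu> :: real
  assumes "\<nu> > 0" "m > 0" "k * m = \<nu>" "x \<ge> 0"
  shows "(2*x) powr \<nu> * exp (- k * x) \<le>
    (2*m) powr \<nu> * exp (1 - \<nu>) * exp (- (decay_rate \<nu> / m) * \<bar>x - m\<bar>)"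
proof (cases "x = 0")
  case False
  define t where "t = x / m - 1"
  have t: "t > -1" "x = m * (1 + t)" using False assms by (simp_all add: t_def field_simps)
  have "(decay_rate \<nu> / m) * \<bar>x - m\<bar> = decay_rate \<nu> * \<bar>t\<bar>"
    using assms by (simp add: t_def field_simps abs_div)
  moreover have "ln (2*x) = ln (2*m) + ln (1 + t)"
    using t assms by (simp add: ln_mult mult.assoc)
  moreover have "k * x = \<nu> * (1 + t)"
    using t assms by (simp add: algebra_simps)
  moreover have "(2*x) powr \<nu> * exp (- k * x) = exp (\<nu> * ln (2*x) - k * x)"
    "(2*m) powr \<nu> = exp (\<nu> * ln (2*m))"
    using False assms by (simp_all add: powr_def mult.commute exp_diff exp_minus field_simps)
  ultimately show ?thesis
    using nu_mult_ln_add_one_minus_le[OF t(1) assms(1)]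
    by (simp add: algebra_simps flip: exp_add)
qed simp

lemma sin_ge_half_self:
  assumes "0 \<le> d" "d \<le> pi/4"
  shows "d/2 \<le> sin d"
proof (cases "d = 0")
  case False
  then have d: "0 < d" using assms by simp
  obtain z where z: "0 < z" "z < d" "sin d - sin 0 = (d - 0) * cos z"
    using MVT2[OF d, of sin cos] by (auto intro: DERIV_sin)
  have "cos (pi/4) \<le> cos z" using z assms by (intro cos_monotone_0_pi_le) auto
  then have "1/2 \<le> cos z" using cos_45 real_sqrt_ge_one[of 2] by linarith
  then show ?thesis using z d mult_left_mono[of "1/2" "cos z" d] by simp
qed simp

lemma abs_diff_le_abs_sin_diff:
  assumes "0 \<le> \<theta>" "\<theta> \<le> pi/2" "0 \<le> \<psi>" "\<psi> \<le> pi/6"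
  shows "\<bar>\<theta> - \<psi>\<bar> \<le> 4 * \<bar>sin \<theta> - sin \<psi>\<bar>"
proof -
  define d where "d = (\<theta> - \<psi>)/2"
  define w where "w = (\<theta> + \<psi>)/2"
  have "\<bar>\<theta> - \<psi>\<bar> \<le> pi/2" using assms pi_gt_zero by (simp add: abs_if)
  then have "\<bar>d\<bar> \<le> pi/4" by (simp add: d_def)
  then have sin_d: "\<bar>d\<bar>/2 \<le> \<bar>sin d\<bar>"
    using sin_ge_half_self[of d] sin_ge_half_self[of "- d"] by (cases "d \<ge> 0") auto
  have "cos (pi/3) \<le> cos w" unfolding w_def using assms by (intro cos_monotone_0_pi_le) auto
  then have cos_w: "1/2 \<le> cos w" by (simp add: cos_60)
  have "\<bar>sin \<theta> - sin \<psi>\<bar> = 2 * \<bar>sin d\<bar> * cos w"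
    using sin_diff_sin[of \<theta> \<psi>] cos_w by (simp add: d_def w_def abs_mult)
  moreover have "2 * (\<bar>d\<bar>/2) * (1/2) \<le> 2 * \<bar>sin d\<bar> * cos w"
    using sin_d cos_w by (intro mult_mono) auto
  ultimately show ?thesis unfolding d_def by simp
qed

lemma half_circle_integrand_le:
  assumes "\<nu> > 0" "k > 0" "\<nu>/k \<le> 1/2" "0 \<le> \<theta>" "\<theta> \<le> pi"
  defines "m \<equiv> \<nu>/k"
  defines "c \<equiv> decay_rate \<nu> / (4*m)"
  shows "(2 * sin \<theta>) powr \<nu> * exp (- k * sin \<theta>) \<le>
    (2*m) powr \<nu> * exp (1 - \<nu>) * (exp (- c * \<bar>\<theta> - arcsin m\<bar>) + exp (- c * \<bar>\<theta> - (pi - arcsin m)\<bar>))"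
proof -
  have m: "0 < m" "m \<le> 1/2" "k * m = \<nu>" using assms by (simp_all add: m_def)
  define \<psi> where "\<psi> = arcsin m"
  have "arcsin m \<le> arcsin (1/2)" using m by (subst arcsin_le_mono) auto
  then have \<psi>: "0 \<le> \<psi>" "\<psi> \<le> pi/6" "sin \<psi> = m"
    using m arcsin_sin[of "pi/6"] by (auto simp: \<psi>_def sin_30 intro!: arcsin_nonneg)
  have "c \<ge> 0" using decay_rate_pos[of \<nu>] assms m by (simp add: c_def)
  have decay: "exp (- (decay_rate \<nu> / m) * \<bar>sin \<theta> - m\<bar>) \<le> exp (- c * \<bar>\<theta>' - \<psi>\<bar>)"
    if "0 \<le> \<theta>'" "\<theta>' \<le> pi/2" "sin \<theta>' = sin \<theta>" for \<theta>'
  proof -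
    have "c * \<bar>\<theta>' - \<psi>\<bar> \<le> c * (4 * \<bar>sin \<theta> - m\<bar>)"
      using abs_diff_le_abs_sin_diff[OF that(1,2) \<psi>(1,2)] that(3) \<psi>(3) \<open>c \<ge> 0\<close>
      by (intro mult_left_mono) auto
    then show ?thesis using m by (simp add: c_def)
  qed
  have "exp (- (decay_rate \<nu> / m) * \<bar>sin \<theta> - m\<bar>) \<le>
      exp (- c * \<bar>\<theta> - \<psi>\<bar>) + exp (- c * \<bar>\<theta> - (pi - \<psi>)\<bar>)"
  proof (cases "\<theta> \<le> pi/2")
    case True
    then show ?thesis using decay[of \<theta>] assms(4) by (simp add: add_increasing2)
  next
    case False
    have "\<bar>pi - \<theta> - \<psi>\<bar> = \<bar>\<theta> - (pi - \<psi>)\<bar>" by simp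
    then show ?thesis using decay[of "pi - \<theta>"] False assms(5) by (simp add: add_increasing)
  qed
  then have "(2*m) powr \<nu> * exp (1 - \<nu>) * exp (- (decay_rate \<nu> / m) * \<bar>sin \<theta> - m\<bar>) \<le>
      (2*m) powr \<nu> * exp (1 - \<nu>) * (exp (- c * \<bar>\<theta> - \<psi>\<bar>) + exp (- c * \<bar>\<theta> - (pi - \<psi>)\<bar>))"
    by (intro mult_left_mono) auto
  moreover have "0 \<le> sin \<theta>" using assms by (intro sin_ge_zero) auto
  ultimately show ?thesis
    using powr_mult_exp_le_peak[OF assms(1) m(1,3)] unfolding \<psi>_def by (meson order_trans)
qed

lemma has_integral_exp_abs_diff:
  fixes a b c p :: real
  assumes "c > 0" "a \<le> p" "p \<le> b"
  shows "((\<lambda>\<theta>. exp (- c * \<bar>\<theta> - p\<bar>)) has_integral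
           (1 - exp (- c * (p - a))) / c + (1 - exp (- c * (b - p))) / c) {a..b}"
proof -
  have "((\<lambda>\<theta>. exp (c * (\<theta> - p))) has_integral (exp (c * (p - p)) / c - exp (c * (a - p)) / c)) {a..p}"
    using assms
    by (intro fundamental_theorem_of_calculus[where f = "\<lambda>\<theta>. exp (c * (\<theta> - p)) / c"])
       (auto intro!: derivative_eq_intros simp: has_real_derivative_iff_has_vector_derivative[symmetric])
  then have "((\<lambda>\<theta>. exp (c * (\<theta> - p))) has_integral (1 - exp (- c * (p - a))) / c) {a..p}"
    by (simp add: diff_divide_distrib right_diff_distrib)
  then have left: "((\<lambda>\<theta>. exp (- c * \<bar>\<theta> - p\<bar>)) has_integral (1 - exp (- c * (p - a))) / c) {a..p}"
    by (rule has_integral_eq[rotated]) (auto simp: abs_if algebra_simps)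
  have "((\<lambda>\<theta>. exp (- c * (\<theta> - p))) has_integral (- exp (- c * (b - p)) / c - (- exp (- c * (p - p)) / c))) {p..b}"
    using assms
    by (intro fundamental_theorem_of_calculus[where f = "\<lambda>\<theta>. - exp (- c * (\<theta> - p)) / c"])
       (auto intro!: derivative_eq_intros simp: has_real_derivative_iff_has_vector_derivative[symmetric])
  then have "((\<lambda>\<theta>. exp (- c * (\<theta> - p))) has_integral (1 - exp (- c * (b - p))) / c) {p..b}"
    by (simp add: diff_divide_distrib)
  then have right: "((\<lambda>\<theta>. exp (- c * \<bar>\<theta> - p\<bar>)) has_integral (1 - exp (- c * (b - p))) / c) {p..b}"
    by (rule has_integral_eq[rotated]) (auto simp: abs_if algebra_simps)
  show ?thesis using has_integral_combine[OF assms(2,3) left right] by simp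
qed

lemma half_circle_integral_le:
  assumes "\<nu> > 0" "2*\<nu> \<le> k"
  defines "m \<equiv> \<nu>/k"
  shows "integral {0..pi} (\<lambda>t. (2 * sin t) powr \<nu> * exp (- k * sin t)) \<le>
    16 * (2*m) powr \<nu> * exp (1 - \<nu>) * m / decay_rate \<nu>"
proof -
  have k: "k > 0" using assms by simp
  have m: "0 < m" "m \<le> 1/2" using assms k by (simp_all add: m_def field_simps)
  define K where "K = (2*m) powr \<nu> * exp (1 - \<nu>)"
  define c where "c = decay_rate \<nu> / (4*m)"
  have c: "c > 0" using decay_rate_pos[OF assms(1)] m by (simp add: c_def)
  define \<psi> where "\<psi> = arcsin m"
  have "0 \<le> \<psi>" "\<psi> \<le> pi/2" using m arcsin_le_mono[of m 1]
    by (auto simp: \<psi>_def intro!: arcsin_nonneg)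
  then have \<psi>: "0 \<le> \<psi>" "\<psi> \<le> pi" using pi_gt_zero by linarith+
  define M where "M \<theta> = K * (exp (- c * \<bar>\<theta> - \<psi>\<bar>) + exp (- c * \<bar>\<theta> - (pi - \<psi>)\<bar>))" for \<theta>
  define J where "J p = (1 - exp (- c * (p - 0))) / c + (1 - exp (- c * (pi - p))) / c" for p
  have J: "J p \<le> 2/c" for p using c by (simp add: J_def field_simps)
  have "((\<lambda>\<theta>. exp (- c * \<bar>\<theta> - p\<bar>)) has_integral J p) {0..pi}" if "p \<in> {\<psi>, pi - \<psi>}" for p
    unfolding J_def by (rule has_integral_exp_abs_diff[OF c]) (use that \<psi> in auto)
  then have "(M has_integral K * (J \<psi> + J (pi - \<psi>))) {0..pi}"
    unfolding M_def by (intro has_integral_mult_right has_integral_add) auto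
  moreover have "(\<lambda>t. (2 * sin t) powr \<nu> * exp (- k * sin t)) integrable_on {0..pi}"
    by (intro integrable_continuous_interval continuous_intros continuous_on_powr')
       (use assms sin_ge_zero in auto)
  ultimately have "integral {0..pi} (\<lambda>t. (2 * sin t) powr \<nu> * exp (- k * sin t)) \<le> K * (J \<psi> + J (pi - \<psi>))"
    using half_circle_integrand_le[OF assms(1) k] m
    by (intro has_integral_le[OF integrable_integral]) (auto simp: M_def K_def c_def \<psi>_def m_def)
  also have "\<dots> \<le> K * (4/c)" using J[of \<psi>] J[of "pi - \<psi>"] by (intro mult_left_mono) (auto simp: K_def)
  also have "\<dots> = 16 * K * m / decay_rate \<nu>" using m decay_rate_pos[OF assms(1)] by (simp add: c_def field_simps)
  finally show ?thesis by (simp add: K_def)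
qed

lemma abs_f_hat_le:
  assumes "\<nu> > 0" "2*\<nu> \<le> \<bar>k\<bar>"
  defines "m \<equiv> \<nu>/\<bar>k\<bar>"
  shows "\<bar>f_hat \<nu> k\<bar> \<le> 16 * (2*m) powr \<nu> * exp (1 - \<nu>) * m / decay_rate \<nu>"
proof -
  have "f_hat \<nu> k = f_hat \<nu> \<bar>k\<bar>" by (cases "k \<ge> 0") (simp_all add: abs_if)
  then show ?thesis
    using abs_f_hat_le_half_circle_integral[OF assms(1), of "\<bar>k\<bar>"] half_circle_integral_le[OF assms(1,2)]
    by (simp add: m_def)
qed

section \<open>Decay of the cosine transform\<close>

lemma sqrt_mult_decay_rate_le:
  assumes "\<epsilon> > 0" "\<epsilon> \<le> \<nu>"
  shows "sqrt (2*\<nu> + 1) * sqrt \<nu> / (decay_rate \<nu>)\<^sup>2 \<le> sqrt (2 + 1/\<epsilon>) * (9 + 64/\<epsilon>)"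
proof -
  have \<nu>: "\<nu> > 0" using assms by simp
  have "(2*\<nu> + 1) * \<nu> \<le> (2 + 1/\<epsilon>) * \<nu>\<^sup>2"
    using assms mult_left_mono[of 1 "\<nu>/\<epsilon>" \<nu>] by (simp add: power2_eq_square field_simps)
  then have "sqrt (2*\<nu> + 1) * sqrt \<nu> \<le> sqrt (2 + 1/\<epsilon>) * \<nu>"
    using real_sqrt_le_mono \<nu> by (fastforce simp: real_sqrt_mult)
  then have "sqrt (2*\<nu> + 1) * sqrt \<nu> / (decay_rate \<nu>)\<^sup>2 \<le> sqrt (2 + 1/\<epsilon>) * (\<nu> / (decay_rate \<nu>)\<^sup>2)"
    by (simp add: divide_right_mono)
  also have "\<dots> \<le> sqrt (2 + 1/\<epsilon>) * (9 + 64/\<epsilon>)"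
  proof (intro mult_left_mono)
    show "\<nu> / (decay_rate \<nu>)\<^sup>2 \<le> 9 + 64/\<epsilon>"
    proof (cases "sqrt \<nu> / 3 \<le> \<nu> / 8")
      case True
      then have "\<nu> / (decay_rate \<nu>)\<^sup>2 = 9" using \<nu> by (simp add: decay_rate_def power_divide)
      then show ?thesis using assms by simp
    next
      case False
      then have "\<nu> / (decay_rate \<nu>)\<^sup>2 = 64 / \<nu>" using \<nu> by (simp add: decay_rate_def power2_eq_square)
      also have "\<dots> \<le> 64 / \<epsilon>" using assms by (intro divide_left_mono) auto
      finally show ?thesis by simp
    qed
  qed (use assms in simp)
  finally show ?thesis .
qed

lemma h_nu_le:
  assumes "\<nu> > 0" "X > 0" "\<nu> \<le> \<bar>X*t/4\<bar>"
  shows "h_nu \<nu> X t \<le> 16 * exp 1 ^ 3 * sqrt (2*\<nu> + 1) / (decay_rate \<nu>)\<^sup>2 *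
           exp (-2*\<nu>) * X * \<bar>4*\<nu>/(X*t)\<bar> powr (2*\<nu> + 2)"
proof -
  define k where "k = t*X/2"
  define m where "m = \<nu>/\<bar>k\<bar>"
  define P where "P = (2*m) powr \<nu>"
  define b where "b = decay_rate \<nu>"
  have k: "2*\<nu> \<le> \<bar>k\<bar>" using assms by (simp add: k_def abs_mult mult.commute)
  then have m: "m > 0" "\<bar>4*\<nu>/(X*t)\<bar> = 2*m" using assms by (auto simp: m_def k_def abs_mult field_simps)
  have b: "b > 0" using decay_rate_pos[OF assms(1)] by (simp add: b_def)
  have "\<bar>f_hat \<nu> k\<bar> \<le> 16 * P * exp (1 - \<nu>) * m / b"
    using abs_f_hat_le[OF assms(1) k] by (simp add: P_def m_def b_def)
  then have "\<bar>f_hat \<nu> k\<bar>\<^sup>2 \<le> (16 * P * exp (1 - \<nu>) * m / b)\<^sup>2"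
    by (intro power_mono) auto
  then have "(f_hat \<nu> k)\<^sup>2 \<le> (16 * P * exp (1 - \<nu>) * m / b)\<^sup>2" by simp
  moreover have "h_nu \<nu> X t = g_const \<nu> * (X/2) * (f_hat \<nu> k)\<^sup>2"
    unfolding k_def by (rule h_nu_eq[OF assms(1,2)])
  ultimately have "h_nu \<nu> X t \<le> (exp 1 / 2 * sqrt (2*\<nu> + 1)) * (X/2) * (16 * P * exp (1 - \<nu>) * m / b)\<^sup>2"
    using g_const_le[OF assms(1)] g_const_pos[of \<nu>] assms(1,2)
    by (simp only:) (intro mult_mono; simp)
  also have "\<dots> = 16 * exp 1 ^ 3 * sqrt (2*\<nu> + 1) / b\<^sup>2 * exp (-2*\<nu>) * X * (P\<^sup>2 * (2*m)\<^sup>2)"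
    using b by (simp add: field_simps power2_eq_square power3_eq_cube flip: exp_add)
  also have "P\<^sup>2 * (2*m)\<^sup>2 = \<bar>4*\<nu>/(X*t)\<bar> powr (2*\<nu> + 2)"
  proof -
    have "(2*m) powr (2*\<nu> + 2) = (2*m) powr \<nu> * (2*m) powr \<nu> * (2*m) powr 2"
      by (simp add: powr_add[symmetric])
    then show ?thesis using m by (simp add: P_def powr_numeral power2_eq_square)
  qed
  finally show ?thesis by (simp add: b_def)
qed

lemma abs_h_nu_le:
  assumes "\<epsilon> > 0" "X > 0" "\<epsilon> \<le> \<nu>" "\<nu> \<le> \<bar>X*t/4\<bar>"
  shows "\<bar>h_nu \<nu> X t\<bar> \<le> 16 * exp 1 ^ 3 * (sqrt (2 + 1/\<epsilon>) * (9 + 64/\<epsilon>)) *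
           \<nu> powr (-1/2) * exp (-2*\<nu>) * X * \<bar>4*\<nu>/(X*t)\<bar> powr (2*\<nu>+2)"
proof -
  have \<nu>: "\<nu> > 0" using assms by simp
  define R where "R = exp (-2*\<nu>) * X * \<bar>4*\<nu>/(X*t)\<bar> powr (2*\<nu>+2)"
  have "h_nu \<nu> X t \<le> 16 * exp 1 ^ 3 * (sqrt (2*\<nu> + 1) * sqrt \<nu> / (decay_rate \<nu>)\<^sup>2) * \<nu> powr (-1/2) * R"
    using h_nu_le[OF \<nu> assms(2,4)] \<nu> by (simp add: R_def powr_minus_divide powr_half_sqrt field_simps)
  also have "\<dots> \<le> 16 * exp 1 ^ 3 * (sqrt (2 + 1/\<epsilon>) * (9 + 64/\<epsilon>)) * \<nu> powr (-1/2) * R"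
    using sqrt_mult_decay_rate_le[OF assms(1,3)] assms(2)
    by (intro mult_right_mono mult_left_mono) (auto simp: R_def)
  finally show ?thesis using h_nu_nonneg[OF \<nu> assms(2)] by (simp add: R_def mult.assoc)
qed

theorem lemmaA1:
  shows "(\<forall>\<nu>>0. \<forall>X>0.
            g_nu \<nu> X 0 = 1 \<and>
            (\<forall>x\<ge>0. x > X \<longrightarrow> g_nu \<nu> X x = 0) \<and>
            (\<forall>t. h_nu \<nu> X t \<ge> 0))
       \<and> (\<forall>\<epsilon>>0. \<exists>C. \<forall>\<nu> X t::real. X > 0 \<and> \<epsilon> \<le> \<nu> \<and> \<nu> \<le> \<bar>X*t/4\<bar> \<longrightarrow>
            \<bar>h_nu \<nu> X t\<bar> \<le> C * \<nu> powr (-1/2) * exp (-2*\<nu>) * X * \<bar>4*\<nu>/(X*t)\<bar> powr (2*\<nu>+2))"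
proof (intro conjI allI impI)
  fix \<nu> X :: real assume "\<nu> > 0" "X > 0"
  then show "g_nu \<nu> X 0 = 1" "\<And>x. x \<ge> 0 \<Longrightarrow> x > X \<Longrightarrow> g_nu \<nu> X x = 0" "\<And>t. h_nu \<nu> X t \<ge> 0"
    using g_nu_0 g_nu_eq_0 h_nu_nonneg by auto
next
  fix \<epsilon> :: real assume "\<epsilon> > 0"
  then show "\<exists>C. \<forall>\<nu> X t::real. X > 0 \<and> \<epsilon> \<le> \<nu> \<and> \<nu> \<le> \<bar>X*t/4\<bar> \<longrightarrow>
      \<bar>h_nu \<nu> X t\<bar> \<le> C * \<nu> powr (-1/2) * exp (-2*\<nu>) * X * \<bar>4*\<nu>/(X*t)\<bar> powr (2*\<nu>+2)"
    using abs_h_nu_le by blast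
qed

end
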